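(* Let $m\ge2$ be an integer and let $\omega\in\mathbb{R}^d$ with $\nu(\omega;\sigma)<\infty$ for some $\sigma>md$. Then Lebesgue-almost every point of the unit circle $\{|\lambda|=1\}$ is $m$-tangentially accessible for the set $\bigcup_{A>0}\Upsilon(A;\omega,\sigma)$. More precisely, for every $\eta>0$ there is $A>0$ such that the set of points of the unit circle that are $m$-tangentially accessible for $\Upsilon(A;\omega,\sigma)$ has complement in the unit circle of one-dimensional Lebesgue measure less than $\eta$.
   Context: $|k|=\sum_i|k_i|$; $\nu(\omega;\sigma)=\sup_{k\in\mathbb{Z}^d\setminus\{0\}}|e^{2\pi ik\cdot\omega}-1|^{-1}|k|^{-\sigma}$; $\nu(\lambda;\omega,\sigma)=\sup_{k\in\mathbb{Z}^d\setminus\{0\}}|e^{2\pi ik\cdot\omega}-\lambda|^{-1}|k|^{-\sigma}$. $\Upsilon(A;\omega,\sigma)=\{\lambda\in\mathbb{C}:\nu(\lambda;\omega,\sigma)\le A\}$, i.e. the complement of $\bigcup_{k\ne0}\{\lambda:|e^{2\pi ik\cdot\omega}-\lambda|<A^{-1}|k|^{-\sigma}\}$. Tangential accessibility: a point $\lambda_0$ is $m$-tangentially accessible for a set $\mathcal{C}\subseteq\mathbb{C}$ if there exist a unit complex number $u$ and $\delta>0$, $\gamma>0$ such that $\{\lambda_0+(t+is)u:\ |t|,|s|<\delta,\ s\ge\gamma|t|^m\}\subseteq\mathcal{C}$. *)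

theory Defs
  imports "HOL-Analysis.Analysis"
begin

definition l1norm :: "int ^ 'd \<Rightarrow> real" where
  "l1norm k = (\<Sum>i\<in>UNIV. real_of_int \<bar>k $ i\<bar>)"

definition kdot :: "int ^ 'd \<Rightarrow> real ^ 'd \<Rightarrow> real" where
  "kdot k w = (\<Sum>i\<in>UNIV. real_of_int (k $ i) * w $ i)"

definition nu_lam :: "complex \<Rightarrow> real ^ 'd \<Rightarrow> real \<Rightarrow> ereal" where
  "nu_lam lam w \<sigma> =
     (SUP k\<in>{k :: int ^ 'd. k \<noteq> 0}.
        (let z = cmod (exp (complex_of_real (2 * pi * kdot k w) * \<i>) - lam)
         in if z = 0 then \<infinity> else ereal (1 / (z * l1norm k powr \<sigma>))))"

definition nu_omega :: "real ^ 'd \<Rightarrow> real \<Rightarrow> ereal" where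
  "nu_omega w \<sigma> = nu_lam 1 w \<sigma>"

definition Upsilon :: "real \<Rightarrow> real ^ 'd \<Rightarrow> real \<Rightarrow> complex set" where
  "Upsilon A w \<sigma> = {lam. nu_lam lam w \<sigma> \<le> ereal A}"

definition tang_accessible :: "nat \<Rightarrow> complex set \<Rightarrow> complex \<Rightarrow> bool" where
  "tang_accessible m C lam0 \<longleftrightarrow>
     (\<exists>u \<delta> \<gamma>. cmod u = 1 \<and> \<delta> > 0 \<and> \<gamma> > 0 \<and>
        {lam0 + (complex_of_real t + \<i> * complex_of_real s) * u | t s.
            \<bar>t\<bar> < \<delta> \<and> \<bar>s\<bar> < \<delta> \<and> s \<ge> \<gamma> * \<bar>t\<bar> ^ m} \<subseteq> C)"

end

theory Submission
  imports Defs "HOL-Analysis.Infinite_Set_Sum"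
begin

no_notation Infinite_Sum.abs_summable_on (infixr \<open>abs'_summable'_on\<close> 46)

text \<open>
  If every resonance \<open>cis (2\<pi> k\<cdot>\<omega>)\<close>, \<open>k \<noteq> 0\<close>, lies at distance at least
  \<open>3 (A |k|\<^sup>\<sigma>)\<^sup>-\<^sup>1\<^sup>/\<^sup>m\<close> from \<open>\<lambda>\<^sub>0\<close>, then the outward tangential region of order \<open>m\<close>
  at \<open>\<lambda>\<^sub>0\<close> keeps distance \<open>(A |k|\<^sup>\<sigma>)\<^sup>-\<^sup>1\<close> from every resonance, hence lies in \<open>\<Upsilon>(A)\<close>.
  The angles violating this condition form a union of arcs of total length
  \<open>O(A\<^sup>-\<^sup>1\<^sup>/\<^sup>m \<Sum>\<^sub>k |k|\<^sup>-\<^sup>\<sigma>\<^sup>/\<^sup>m)\<close>, and the series converges because \<open>\<sigma>/m > d\<close>.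
  Letting \<open>A \<rightarrow> \<infinity>\<close> makes the exceptional set arbitrarily small, and the
  angles that are exceptional for every \<open>A\<close> form a null set.
\<close>

lemma cos_ge_1_minus_sq_div2: fixes x :: real shows "1 - x\<^sup>2 / 2 \<le> cos x"
proof -
  let ?f = "\<lambda>x. cos x - 1 + x\<^sup>2 / 2"
  have "?f \<bar>x\<bar> \<ge> ?f 0"
  proof (rule DERIV_nonneg_imp_nondecreasing [of 0])
    fix u :: real assume "0 \<le> u" "u \<le> \<bar>x\<bar>"
    show "\<exists>y. (?f has_real_derivative y) (at u) \<and> 0 \<le> y"
      using sin_x_le_x[OF \<open>0 \<le> u\<close>]
      by (intro exI[of _ "u - sin u"] conjI derivative_eq_intros) (auto simp: power2_eq_square)
  qed simp
  then show ?thesis by simp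
qed

lemma sin_ge_x_minus_cube_div6: fixes x :: real assumes "0 \<le> x" shows "x - x ^ 3 / 6 \<le> sin x"
proof -
  let ?f = "\<lambda>x. sin x - x + x ^ 3 / 6"
  have "?f x \<ge> ?f 0"
  proof (rule DERIV_nonneg_imp_nondecreasing [OF assms])
    fix u :: real
    show "\<exists>y. (?f has_real_derivative y) (at u) \<and> 0 \<le> y"
      using cos_ge_1_minus_sq_div2[of u]
      by (intro exI[of _ "cos u - 1 + u\<^sup>2 / 2"] conjI derivative_eq_intros) (auto simp: power2_eq_square)
  qed
  then show ?thesis by simp
qed

lemma abs_le_3_cmod_cis_minus_1:
  fixes y :: real assumes "\<bar>y\<bar> \<le> pi" shows "\<bar>y\<bar> \<le> 3 * cmod (cis y - 1)"
proof -
  define x where "x = \<bar>y\<bar> / 2"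
  have x: "0 \<le> x" "x \<le> pi / 2" using assms by (auto simp: x_def)
  have "(cmod (cis y - 1))\<^sup>2 = (cos y - 1)\<^sup>2 + (sin y)\<^sup>2" by (simp add: cmod_power2)
  also have "\<dots> = 2 - 2 * cos \<bar>y\<bar>"
    using sin_cos_squared_add[of y] by (simp add: power2_eq_square algebra_simps)
  also have "\<dots> = (2 * sin x)\<^sup>2" unfolding x_def using cos_double_sin[of "\<bar>y\<bar> / 2"] by simp
  finally have "(cmod (cis y - 1))\<^sup>2 = (2 * sin x)\<^sup>2" .
  moreover have "0 \<le> 2 * sin x" using sin_ge_zero[of x] x pi_half_less_two by simp
  ultimately have chord: "cmod (cis y - 1) = 2 * sin x"
    by (metis norm_ge_zero power2_eq_iff_nonneg)
  have "x\<^sup>2 \<le> 2\<^sup>2" using x pi_half_less_two by (intro power_mono) auto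
  then have "x / 3 \<le> x - x ^ 3 / 6"
    using mult_left_mono[OF _ x(1), of "x\<^sup>2" 4] by (simp add: power2_eq_square power3_eq_cube)
  also have "\<dots> \<le> sin x" by (rule sin_ge_x_minus_cube_div6[OF x(1)])
  finally show ?thesis using chord by (simp add: x_def)
qed

lemma cis_near_imp_angle_near:
  fixes a \<theta> \<rho> :: real
  assumes \<theta>: "\<theta> \<in> {0..<2*pi}" and near: "cmod (cis a - cis \<theta>) < \<rho>"
  obtains j :: int where "j \<in> {-1, 0, 1}" "\<bar>\<theta> - (2*pi * frac (a / (2*pi)) + 2*pi*j)\<bar> < 3 * \<rho>"
proof -
  define a' where "a' = 2*pi * frac (a / (2*pi))"
  have a': "0 \<le> a'" "a' < 2*pi" using frac_lt_1[of "a / (2*pi)"] by (auto simp: a'_def)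
  have "a = a' + 2*pi * \<lfloor>a / (2*pi)\<rfloor>" by (simp add: a'_def frac_def algebra_simps)
  then have cis_a: "cis a = cis a'" by (metis cis_mult cis_multiple_2pi Ints_of_int mult_1_right)
  obtain j :: int where j: "j \<in> {-1, 0, 1}" "\<bar>\<theta> - a' - 2*pi*j\<bar> \<le> pi"
  proof -
    consider "\<theta> - a' > pi" | "\<theta> - a' < - pi" | "\<bar>\<theta> - a'\<bar> \<le> pi" by linarith
    then show ?thesis using that[of 1] that[of "-1"] that[of 0] \<theta> a' by cases auto
  qed
  define y where "y = \<theta> - a' - 2*pi*j"
  have "cis a' * cis y = cis (\<theta> - 2*pi*j)" by (simp add: cis_mult y_def)
  also have "\<dots> = cis \<theta>" by (metis cis_divide cis_multiple_2pi Ints_of_int div_by_1)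
  finally have "cis a - cis \<theta> = - cis a' * (cis y - 1)" by (simp add: cis_a algebra_simps)
  then have "cmod (cis a - cis \<theta>) = cmod (cis y - 1)" by (simp add: norm_mult)
  then have "\<bar>y\<bar> < 3 * \<rho>" using abs_le_3_cmod_cis_minus_1[of y] j(2) near by (simp add: y_def)
  then show ?thesis using that[OF j(1)] by (simp add: y_def a'_def algebra_simps)
qed

lemma cis_near_sets_borel: "{\<theta> \<in> {0..<2*pi}. cmod (cis a - cis \<theta>) < \<rho>} \<in> sets borel"
proof -
  have "open {\<theta>. cmod (cis a - cis \<theta>) < \<rho>}"
    by (intro open_Collect_less continuous_intros)
  then show ?thesis by (simp add: Collect_conj_eq)
qed

lemma emeasure_cis_near_le:
  fixes a \<rho> :: real assumes "0 \<le> \<rho>"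
  shows "emeasure lborel {\<theta> \<in> {0..<2*pi}. cmod (cis a - cis \<theta>) < \<rho>} \<le> ennreal (18 * \<rho>)"
proof -
  define c where "c = 2*pi * frac (a / (2*pi))"
  define I where "I j = {c + 2*pi*j - 3*\<rho> <..< c + 2*pi*j + 3*\<rho>}" for j :: int
  have "emeasure lborel {\<theta> \<in> {0..<2*pi}. cmod (cis a - cis \<theta>) < \<rho>}
      \<le> emeasure lborel (\<Union>j\<in>{-1, 0, 1}. I j)"
  proof (rule emeasure_mono)
    show "{\<theta> \<in> {0..<2*pi}. cmod (cis a - cis \<theta>) < \<rho>} \<subseteq> (\<Union>j\<in>{-1, 0, 1}. I j)"
    proof
      fix \<theta> assume "\<theta> \<in> {\<theta> \<in> {0..<2*pi}. cmod (cis a - cis \<theta>) < \<rho>}"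
      then obtain j :: int where "j \<in> {-1, 0, 1}" "\<bar>\<theta> - (c + 2*pi*j)\<bar> < 3 * \<rho>"
        unfolding c_def by (blast elim: cis_near_imp_angle_near)
      then show "\<theta> \<in> (\<Union>j\<in>{-1, 0, 1}. I j)" by (auto simp: I_def abs_less_iff)
    qed
  qed (auto simp: I_def)
  also have "\<dots> \<le> (\<Sum>j\<in>{-1, 0, 1}. emeasure lborel (I j))"
    by (rule emeasure_subadditive_finite) (auto simp: I_def)
  also have "\<dots> = 3 * ennreal (6 * \<rho>)"
    using assms by (simp add: I_def)
  also have "\<dots> = ennreal (18 * \<rho>)"
    using ennreal_mult'[of 3 "6 * \<rho>"] by simp
  finally show ?thesis .
qed

lemma emeasure_UN_cis_near_le:
  fixes a r :: "nat \<Rightarrow> real"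
  assumes r: "summable r" "\<And>n. 0 \<le> r n"
  shows "emeasure lborel (\<Union>n. {\<theta> \<in> {0..<2*pi}. cmod (cis (a n) - cis \<theta>) < r n})
    \<le> ennreal (18 * suminf r)"
proof -
  have "emeasure lborel (\<Union>n. {\<theta> \<in> {0..<2*pi}. cmod (cis (a n) - cis \<theta>) < r n})
      \<le> (\<Sum>n. emeasure lborel {\<theta> \<in> {0..<2*pi}. cmod (cis (a n) - cis \<theta>) < r n})"
    using cis_near_sets_borel by (intro emeasure_subadditive_countably) auto
  also have "\<dots> \<le> (\<Sum>n. ennreal (18 * r n))"
    using r(2) by (intro suminf_le summableI emeasure_cis_near_le)
  also have "\<dots> = ennreal (\<Sum>n. 18 * r n)"
    using r by (intro suminf_ennreal2 summable_mult) auto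
  also have "(\<Sum>n. 18 * r n) = 18 * suminf r"
    using r(1) by (rule suminf_mult)
  finally show ?thesis .
qed

lemma l1norm_nonneg: "0 \<le> l1norm k"
  unfolding l1norm_def by (simp add: sum_nonneg)

lemma abs_le_l1norm: "real_of_int \<bar>k $ i\<bar> \<le> l1norm k"
  unfolding l1norm_def by (rule member_le_sum) auto

lemma l1norm_ge_1: assumes "k \<noteq> 0" shows "1 \<le> l1norm k"
proof -
  obtain i where "k $ i \<noteq> 0" using assms by (metis vec_eq_iff zero_index)
  then show ?thesis using abs_le_l1norm[of k i] by linarith
qed

lemma abs_summable_on_int_powr:
  fixes q :: real assumes "q > 1"
  shows "(\<lambda>n::int. (1 + real_of_int \<bar>n\<bar>) powr - q) abs_summable_on UNIV"
proof -
  let ?g = "\<lambda>n::int. (1 + real_of_int \<bar>n\<bar>) powr - q"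
  have "summable (\<lambda>n. real n powr - q)" using assms summable_real_powr_iff by simp
  then have "summable (\<lambda>n. real (Suc n) powr - q)" by (subst summable_Suc_iff)
  then have nat: "(\<lambda>n::nat. (1 + real n) powr - q) abs_summable_on UNIV"
    by (simp add: abs_summable_on_nat_iff' add.commute)
  have "?g abs_summable_on range int" "?g abs_summable_on range (\<lambda>n. - int n)"
    using nat by (auto intro!: abs_summable_on_reindex)
  moreover have "n \<in> range int \<union> range (\<lambda>n. - int n)" for n :: int
    by (cases "0 \<le> n") (auto intro: image_eqI[of _ _ "nat n"] image_eqI[of _ _ "nat (- n)"])
  then have "UNIV = range int \<union> range (\<lambda>n. - int n)" by blast
  ultimately show ?thesis by (metis abs_summable_on_union)
qed

lemma abs_summable_on_vec_prod_powr:
  fixes q :: real assumes "q > 1"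
  shows "(\<lambda>k::int ^ 'd. \<Prod>i\<in>UNIV. (1 + real_of_int \<bar>k $ i\<bar>) powr - q) abs_summable_on UNIV"
proof -
  let ?g = "\<lambda>n::int. (1 + real_of_int \<bar>n\<bar>) powr - q"
  have inj: "inj (vec_nth :: int ^ 'd \<Rightarrow> 'd \<Rightarrow> int)" by (simp add: inj_on_def vec_eq_iff)
  have "(\<lambda>p. \<Prod>i\<in>UNIV. ?g (p i)) abs_summable_on PiE (UNIV :: 'd set) (\<lambda>_. UNIV)"
    using abs_summable_on_int_powr[OF assms] by (intro abs_summable_on_prod_PiE) auto
  also have "PiE (UNIV :: 'd set) (\<lambda>_. UNIV :: int set) = range vec_nth"
    by (auto simp: PiE_UNIV_domain intro!: image_eqI[of _ _ "vec_lambda _"])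
  finally show ?thesis
    using abs_summable_on_reindex_iff[OF inj, of "\<lambda>p. \<Prod>i\<in>UNIV. ?g (p i)"] by simp
qed

lemma one_plus_l1norm_powr_le_prod:
  fixes k :: "int ^ 'd" and q :: real assumes "0 \<le> q"
  shows "(1 + l1norm k) powr - (q * CARD('d)) \<le> (\<Prod>i\<in>UNIV. (1 + real_of_int \<bar>k $ i\<bar>) powr - q)"
proof -
  have "(1 + l1norm k) powr - (q * CARD('d)) = (\<Prod>i\<in>(UNIV :: 'd set). (1 + l1norm k) powr - q)"
    using l1norm_nonneg[of k] by (simp add: powr_power mult.commute)
  also have "\<dots> \<le> (\<Prod>i\<in>UNIV. (1 + real_of_int \<bar>k $ i\<bar>) powr - q)"
    using assms abs_le_l1norm[of k] by (intro prod_mono conjI powr_mono2') auto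
  finally show ?thesis .
qed

lemma abs_summable_on_l1norm_powr:
  fixes p :: real assumes "p > CARD('d)"
  shows "(\<lambda>k::int ^ 'd. l1norm k powr - p) abs_summable_on {k. k \<noteq> 0}"
proof -
  define q where "q = p / CARD('d)"
  have q: "q > 1" "p = q * CARD('d)" using assms by (auto simp: q_def field_simps)
  let ?G = "\<lambda>k::int ^ 'd. 2 powr p * (\<Prod>i\<in>UNIV. (1 + real_of_int \<bar>k $ i\<bar>) powr - q)"
  have "?G abs_summable_on {k. k \<noteq> 0}"
    using abs_summable_on_vec_prod_powr[OF q(1)] by (auto intro: abs_summable_on_subset)
  then show ?thesis
  proof (rule abs_summable_on_comparison_test')
    fix k :: "int ^ 'd" assume "k \<in> {k. k \<noteq> 0}"
    then have L: "1 \<le> l1norm k" by (simp add: l1norm_ge_1)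
    have "l1norm k powr - p = 2 powr p * (2 * l1norm k) powr - p"
      using L by (simp add: powr_mult powr_minus)
    also have "\<dots> \<le> 2 powr p * (1 + l1norm k) powr - p"
      using L assms by (intro mult_left_mono powr_mono2') auto
    also have "\<dots> \<le> ?G k"
      using one_plus_l1norm_powr_le_prod[of q k] q by (simp add: mult_left_mono)
    finally show "norm (l1norm k powr - p) \<le> ?G k" by simp
  qed
qed

lemma summable_l1norm_powr_enumeration:
  fixes p :: real assumes "CARD('d) < p"
  obtains e :: "nat \<Rightarrow> int ^ 'd"
  where "bij_betw e UNIV {k. k \<noteq> 0}" "summable (\<lambda>n. l1norm (e n) powr - p)"
proof -
  have "inj (\<lambda>n::nat. \<chi> i::'d. int n + 1)" by (auto simp: inj_on_def vec_eq_iff)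
  moreover have "range (\<lambda>n::nat. \<chi> i::'d. int n + 1) \<subseteq> {k. k \<noteq> 0}" by (auto simp: vec_eq_iff)
  ultimately have "infinite {k :: int ^ 'd. k \<noteq> 0}" using range_inj_infinite finite_subset by blast
  then obtain e :: "nat \<Rightarrow> int ^ 'd" where e: "bij_betw e UNIV {k. k \<noteq> 0}"
    using bij_betw_from_nat_into countable_subset[OF subset_UNIV countableI_type] by blast
  then have "summable (\<lambda>n. norm (l1norm (e n) powr - p))"
    using abs_summable_on_reindex_bij_betw[OF e, of "\<lambda>k. l1norm k powr - p"]
      abs_summable_on_l1norm_powr[OF assms] by (simp add: abs_summable_on_nat_iff')
  then have "summable (\<lambda>n. l1norm (e n) powr - p)" by (rule summable_norm_cancel)
  with e show ?thesis by (rule that)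
qed

lemma nu_lam_le_ereal:
  fixes w :: "real ^ 'd"
  assumes A: "0 < A"
    and far: "\<And>k. k \<noteq> 0 \<Longrightarrow> 1 / (A * l1norm k powr \<sigma>) \<le> cmod (cis (2 * pi * kdot k w) - lam)"
  shows "nu_lam lam w \<sigma> \<le> ereal A"
  unfolding nu_lam_def
proof (rule SUP_least)
  fix k :: "int ^ 'd" assume "k \<in> {k. k \<noteq> 0}"
  then have k: "k \<noteq> 0" by simp
  define z where "z = cmod (exp (complex_of_real (2 * pi * kdot k w) * \<i>) - lam)"
  define L where "L = l1norm k powr \<sigma>"
  have L: "0 < L" using l1norm_ge_1[OF k] by (simp add: L_def)
  have "1 / (A * L) \<le> z"
    using far[OF k] by (simp add: z_def L_def cis_conv_exp mult.commute)
  moreover have "0 < 1 / (A * L)" using A L by simp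
  ultimately have z: "0 < z" by linarith
  with \<open>1 / (A * L) \<le> z\<close> have "1 / (z * L) \<le> A" using A L by (simp add: field_simps)
  then show "(let z = cmod (exp (complex_of_real (2 * pi * kdot k w) * \<i>) - lam)
      in if z = 0 then \<infinity> else ereal (1 / (z * l1norm k powr \<sigma>))) \<le> ereal A"
    unfolding Let_def z_def[symmetric] L_def[symmetric] using z by simp
qed

text \<open>With \<open>u = -\<i> \<lambda>\<^sub>0\<close> the point \<open>\<lambda>\<^sub>0 + (t + \<i> s) u\<close> equals \<open>\<lambda>\<^sub>0 (1 + s - \<i> t)\<close>:
  \<open>s\<close> is the outward radial displacement and \<open>t\<close> the tangential one.\<close>

lemma cmod_sub_tangential_point_ge:
  fixes c lam0 :: complex and r t s :: real and m :: nat
  assumes c: "cmod c \<le> 1" and lam0: "cmod lam0 = 1" and r: "0 < r" "r \<le> 1" and m: "1 \<le> m"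
    and st: "\<bar>t\<bar> ^ m \<le> s" and far: "3 * r powr (1 / m) \<le> cmod (c - lam0)"
  shows "r \<le> cmod (c - (lam0 + (complex_of_real t + \<i> * complex_of_real s) * (- \<i> * lam0)))"
    (is "_ \<le> cmod (c - ?lam)")
proof -
  have lam: "?lam = lam0 * Complex (1 + s) (- t)" by (simp add: complex_eq_iff algebra_simps)
  have s: "0 \<le> s" using st by (metis abs_ge_zero order_trans zero_le_power)
  define \<rho> where "\<rho> = r powr (1 / m)"
  have r_le_\<rho>: "r \<le> \<rho>" unfolding \<rho>_def using powr_mono'[of "1 / m" 1 r] r m by simp
  show ?thesis
  proof (cases "r \<le> s")
    case True
    have "cmod ?lam = cmod (Complex (1 + s) (- t))" using lam0 unfolding lam by (simp add: norm_mult)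
    then have "1 + s \<le> cmod ?lam" using abs_Re_le_cmod[of "Complex (1 + s) (- t)"] s by simp
    moreover have "cmod ?lam - cmod c \<le> cmod (c - ?lam)"
      by (metis norm_minus_commute norm_triangle_ineq2)
    ultimately show ?thesis using c True by linarith
  next
    case False
    have t: "\<bar>t\<bar> < \<rho>"
    proof (cases "t = 0")
      case True then show ?thesis using r by (simp add: \<rho>_def)
    next
      case False
      have "\<bar>t\<bar> = (\<bar>t\<bar> ^ m) powr (1 / m)"
        using False m by (simp add: powr_realpow[symmetric] powr_powr)
      also have "\<dots> < \<rho>"
        unfolding \<rho>_def using \<open>\<not> r \<le> s\<close> st m by (intro powr_less_mono2) auto
      finally show ?thesis .
    qed
    have "?lam - lam0 = lam0 * Complex s (- t)" by (simp add: complex_eq_iff algebra_simps)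
    then have "cmod (?lam - lam0) = cmod (Complex s (- t))" using lam0 by (simp add: norm_mult)
    also have "\<dots> \<le> \<bar>s\<bar> + \<bar>t\<bar>" using cmod_le[of "Complex s (- t)"] by simp
    finally have "cmod (?lam - lam0) < 2 * \<rho>" using t False s r_le_\<rho> by linarith
    moreover have "cmod (c - lam0) - cmod (?lam - lam0) \<le> cmod (c - ?lam)"
      using norm_triangle_ineq4[of "c - ?lam" "lam0 - ?lam"] by (simp add: norm_minus_commute)
    ultimately show ?thesis using far r_le_\<rho> unfolding \<rho>_def by linarith
  qed
qed

lemma tang_accessible_Upsilon:
  fixes w :: "real ^ 'd"
  assumes lam0: "cmod lam0 = 1" and A: "1 \<le> A" and m: "1 \<le> m" and \<sigma>: "0 \<le> \<sigma>"
    and far: "\<And>k. k \<noteq> 0 \<Longrightarrow>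
      3 * (1 / (A * l1norm k powr \<sigma>)) powr (1 / m) \<le> cmod (cis (2 * pi * kdot k w) - lam0)"
  shows "tang_accessible m (Upsilon A w \<sigma>) lam0"
  unfolding tang_accessible_def
proof (intro exI conjI)
  show "cmod (- \<i> * lam0) = 1" using lam0 by (simp add: norm_mult)
  show "{lam0 + (complex_of_real t + \<i> * complex_of_real s) * (- \<i> * lam0) | t s.
      \<bar>t\<bar> < 1 \<and> \<bar>s\<bar> < 1 \<and> 1 * \<bar>t\<bar> ^ m \<le> s} \<subseteq> Upsilon A w \<sigma>"
  proof safe
    fix t s :: real assume "1 * \<bar>t\<bar> ^ m \<le> s"
    then have st: "\<bar>t\<bar> ^ m \<le> s" by simp
    show "lam0 + (complex_of_real t + \<i> * complex_of_real s) * (- \<i> * lam0) \<in> Upsilon A w \<sigma>"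
      unfolding Upsilon_def mem_Collect_eq
    proof (rule nu_lam_le_ereal)
      fix k :: "int ^ 'd" assume k: "k \<noteq> 0"
      have L: "1 \<le> l1norm k powr \<sigma>" using l1norm_ge_1[OF k] \<sigma> by (simp add: ge_one_powr_ge_zero)
      have "1 \<le> A * l1norm k powr \<sigma>" using mult_mono[OF A L] A by simp
      then have "1 / (A * l1norm k powr \<sigma>) \<le> 1" by simp
      then show "1 / (A * l1norm k powr \<sigma>)
          \<le> cmod (cis (2 * pi * kdot k w) - (lam0 + (complex_of_real t + \<i> * complex_of_real s) * (- \<i> * lam0)))"
        using A l1norm_ge_1[OF k] by (intro cmod_sub_tangential_point_ge[OF _ lam0 _ _ m st far[OF k]]) auto
    qed (use A in simp)
  qed
qed auto

lemma tang_accessible_mono: "C \<subseteq> D \<Longrightarrow> tang_accessible m C lam \<Longrightarrow> tang_accessible m D lam"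
  unfolding tang_accessible_def by blast

lemma small_cover_of_inaccessible_angles:
  fixes w :: "real ^ 'd" and \<sigma> \<eta> :: real and m :: nat
  assumes m: "1 \<le> m" and \<sigma>: "m * CARD('d) < \<sigma>" and \<eta>: "0 < \<eta>"
  shows "\<exists>A\<ge>1. \<exists>S \<in> sets lebesgue.
      {\<theta> \<in> {0..<2*pi}. \<not> tang_accessible m (Upsilon A w \<sigma>) (cis \<theta>)} \<subseteq> S
      \<and> emeasure lebesgue S < ennreal \<eta>"
proof -
  define p where "p = \<sigma> / m"
  have p: "CARD('d) < p" using \<sigma> m by (simp add: p_def field_simps)
  have "0 \<le> \<sigma>" using \<sigma> by (smt (verit) of_nat_0_le_iff mult_nonneg_nonneg)
  obtain e :: "nat \<Rightarrow> int ^ 'd" where e: "bij_betw e UNIV {k. k \<noteq> 0}"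
    and summable: "summable (\<lambda>n. l1norm (e n) powr - p)"
    by (rule summable_l1norm_powr_enumeration[OF p])
  define F where "F = (\<lambda>n. l1norm (e n) powr - p)"
  have F: "summable F" unfolding F_def by (fact summable)
  have F_nonneg: "0 \<le> F n" for n by (simp add: F_def)
  \<comment> \<open>\<open>A\<^sup>1\<^sup>/\<^sup>m = x\<close> is chosen so that the arcs below have total length \<open>54 (\<Sum>F) / x < \<eta>\<close>.\<close>
  define x where "x = 54 * suminf F / \<eta> + 1"
  have x: "1 \<le> x" using \<eta> F F_nonneg by (simp add: x_def suminf_nonneg)
  define A where "A = x ^ m"
  have A: "1 \<le> A" using x by (simp add: A_def)
  have A_root: "A powr (1 / m) = x" using x m by (simp add: A_def powr_realpow[symmetric] powr_powr)
  define S where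
    "S = (\<Union>n. {\<theta> \<in> {0..<2*pi}. cmod (cis (2 * pi * kdot (e n) w) - cis \<theta>) < 3 * F n / x})"
  have cover: "{\<theta> \<in> {0..<2*pi}. \<not> tang_accessible m (Upsilon A w \<sigma>) (cis \<theta>)} \<subseteq> S"
  proof safe
    fix \<theta> :: real assume \<theta>: "\<theta> \<in> {0..<2*pi}" and "\<not> tang_accessible m (Upsilon A w \<sigma>) (cis \<theta>)"
    then obtain k :: "int ^ 'd" where k: "k \<noteq> 0" and
      near: "cmod (cis (2 * pi * kdot k w) - cis \<theta>) < 3 * (1 / (A * l1norm k powr \<sigma>)) powr (1 / m)"
      using tang_accessible_Upsilon[of "cis \<theta>" A m \<sigma> w] A m \<open>0 \<le> \<sigma>\<close> by (force simp: not_le)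
    obtain n where n: "k = e n" using e k unfolding bij_betw_def by auto
    have "(1 / (A * l1norm k powr \<sigma>)) powr (1 / m) = F n / x"
      using A l1norm_ge_1[OF k] m
      by (simp add: F_def n p_def powr_divide powr_mult powr_powr A_root powr_minus_divide)
    then show "\<theta> \<in> S" using \<theta> near n by (auto simp: S_def)
  qed
  have S_borel: "S \<in> sets lborel"
    unfolding S_def using cis_near_sets_borel by (intro sets.countable_UN) auto
  have "emeasure lebesgue S = emeasure lborel S" using S_borel by simp
  also have "\<dots> \<le> ennreal (18 * (\<Sum>n. 3 * F n / x))"
    unfolding S_def using F F_nonneg x
    by (intro emeasure_UN_cis_near_le summable_divide summable_mult) simp_all
  also have "18 * (\<Sum>n. 3 * F n / x) = 54 / x * suminf F"
    using F by (simp add: suminf_divide suminf_mult)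
  also have "ennreal (54 / x * suminf F) < ennreal \<eta>"
  proof (rule ennreal_lessI)
    have "54 * suminf F < \<eta> * x" using \<eta> by (simp add: x_def field_simps)
    then show "54 / x * suminf F < \<eta>" using x by (simp add: field_simps)
  qed (use \<eta> in simp)
  finally have "emeasure lebesgue S < ennreal \<eta>" .
  moreover have "S \<in> sets lebesgue" using S_borel by simp
  ultimately show ?thesis using A cover by blast
qed

lemma null_set_cover_if_small_covers:
  assumes "\<And>\<eta>. 0 < \<eta> \<Longrightarrow> \<exists>S \<in> sets M. X \<subseteq> S \<and> emeasure M S < ennreal \<eta>"
  shows "\<exists>N \<in> null_sets M. X \<subseteq> N"
proof -
  have "\<forall>n::nat. \<exists>S. S \<in> sets M \<and> X \<subseteq> S \<and> emeasure M S < ennreal (1 / Suc n)"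
    using assms by (metis of_nat_0_less_iff zero_less_Suc zero_less_divide_1_iff)
  then obtain S where S: "\<And>n::nat. S n \<in> sets M \<and> X \<subseteq> S n \<and> emeasure M (S n) < ennreal (1 / Suc n)"
    by metis
  have "emeasure M (\<Inter>n. S n) \<le> 0"
  proof (rule ennreal_le_epsilon)
    fix \<epsilon> :: real assume "0 < \<epsilon>"
    then obtain n :: nat where n: "1 / Suc n < \<epsilon>" using nat_approx_posE by blast
    have "emeasure M (\<Inter>n. S n) \<le> emeasure M (S n)" using S by (intro emeasure_mono) auto
    also have "\<dots> \<le> ennreal \<epsilon>" using S[of n] n by (metis ennreal_leI less_imp_le order.trans)
    finally show "emeasure M (\<Inter>n. S n) \<le> 0 + ennreal \<epsilon>" by simp
  qed
  then have "(\<Inter>n. S n) \<in> null_sets M" using S by (intro null_setsI) auto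
  then show ?thesis using S by blast
qed

theorem mainTheorem4:
  fixes w :: "real ^ 'd" and \<sigma> :: real and m :: nat
  assumes "m \<ge> 2"
    and "\<sigma> > real m * real CARD('d)"
    and "nu_omega w \<sigma> < \<infinity>"
  shows "(\<exists>N \<in> null_sets lebesgue.
            {\<theta> \<in> {0..<2*pi}. \<not> tang_accessible m (\<Union>A\<in>{A. A > 0}. Upsilon A w \<sigma>) (cis \<theta>)}
              \<subseteq> N)
       \<and> (\<forall>\<eta> > 0. \<exists>A > 0. \<exists>S \<in> sets lebesgue.
            {\<theta> \<in> {0..<2*pi}. \<not> tang_accessible m (Upsilon A w \<sigma>) (cis \<theta>)} \<subseteq> S
            \<and> emeasure lebesgue S < ennreal \<eta>)"
proof -
  let ?E = "\<lambda>C. {\<theta> \<in> {0..<2*pi}. \<not> tang_accessible m C (cis \<theta>)}"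
  let ?U = "\<Union>A\<in>{A. A > 0}. Upsilon A w \<sigma>"
  have small: "\<exists>A\<ge>1. \<exists>S \<in> sets lebesgue. ?E (Upsilon A w \<sigma>) \<subseteq> S \<and> emeasure lebesgue S < ennreal \<eta>"
    if "0 < \<eta>" for \<eta>
    using small_cover_of_inaccessible_angles[of m \<sigma> \<eta> w] assms(1,2) that by simp
  have E_mono: "?E ?U \<subseteq> ?E (Upsilon A w \<sigma>)" if "1 \<le> A" for A
  proof -
    have "Upsilon A w \<sigma> \<subseteq> ?U" using that by (intro UN_upper) simp
    then show ?thesis using tang_accessible_mono by blast
  qed
  have "\<exists>S \<in> sets lebesgue. ?E ?U \<subseteq> S \<and> emeasure lebesgue S < ennreal \<eta>" if \<eta>: "0 < \<eta>" for \<eta>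
  proof -
    obtain A S where "1 \<le> A" "S \<in> sets lebesgue" "emeasure lebesgue S < ennreal \<eta>"
      and "?E (Upsilon A w \<sigma>) \<subseteq> S"
      using small[OF \<eta>] by blast
    then show ?thesis using E_mono[OF \<open>1 \<le> A\<close>] by blast
  qed
  then have "\<exists>N \<in> null_sets lebesgue. ?E ?U \<subseteq> N" by (rule null_set_cover_if_small_covers)
  moreover have "\<forall>\<eta> > 0. \<exists>A > 0. \<exists>S \<in> sets lebesgue. ?E (Upsilon A w \<sigma>) \<subseteq> S
      \<and> emeasure lebesgue S < ennreal \<eta>"
    using small by (meson order.strict_trans2 zero_less_one)
  ultimately show ?thesis by (intro conjI)
qed

end
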